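(* Let $D$ be a strongly connected digraph with girth $g$ (having at least one cycle), and let $T$ be a DFS tree of $D$ rooted at $r$, of length $t$, with levels $V_0,\ldots,V_t$. Then for each $h$ with $0\le h\le t-g+2$, the set $W_h=\bigcup_{i=0}^{g-2}V_{h+i}$ induces an acyclic subdigraph of $D$, and there is no backward arc with both ends in $W_h$.
   Context: Digraphs are finite and loopless; paths and cycles are directed; $l(\cdot)$ denotes length. Girth is the length of a shortest directed cycle. A DFS tree $T$ of a strongly connected digraph $D$ rooted at $r$ is the spanning out-branching produced by a depth-first search started at $r$. $P_u$ is the unique $ru$-path in $T$; the length $t$ of $T$ is the length of a longest path in $T$; the levels are $V_i=\{u: l(P_u)=i\}$, $0\le i\le t$. An arc $(u,v)$ is a backward arc if $T$ contains a $vu$-path. *)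

theory Defs
  imports Main
begin

definition digraph :: "'a set \<Rightarrow> ('a \<times> 'a) set \<Rightarrow> bool" where
  "digraph V A \<longleftrightarrow> finite V \<and> A \<subseteq> V \<times> V \<and> (\<forall>v. (v, v) \<notin> A)"

definition strongly_connected :: "'a set \<Rightarrow> ('a \<times> 'a) set \<Rightarrow> bool" where
  "strongly_connected V A \<longleftrightarrow> (\<forall>u\<in>V. \<forall>v\<in>V. (u, v) \<in> A\<^sup>*)"

definition is_cycle :: "('a \<times> 'a) set \<Rightarrow> 'a list \<Rightarrow> bool" where
  "is_cycle A c \<longleftrightarrow> length c \<ge> 2 \<and> distinct c \<and>
     (\<forall>i < length c. (c ! i, c ! ((i + 1) mod length c)) \<in> A)"

definition girth :: "('a \<times> 'a) set \<Rightarrow> nat" where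
  "girth A = (LEAST k. \<exists>c. is_cycle A c \<and> length c = k)"

definition induces_acyclic :: "('a \<times> 'a) set \<Rightarrow> 'a set \<Rightarrow> bool" where
  "induces_acyclic A W \<longleftrightarrow> \<not> (\<exists>c. is_cycle A c \<and> set c \<subseteq> W)"

text \<open>Depth-first search: states are (stack, visited set, tree arcs).\<close>
inductive dfs_step :: "('a \<times> 'a) set \<Rightarrow> ('a list \<times> 'a set \<times> ('a \<times> 'a) set)
     \<Rightarrow> ('a list \<times> 'a set \<times> ('a \<times> 'a) set) \<Rightarrow> bool" for A where
  push: "(u, v) \<in> A \<Longrightarrow> v \<notin> X \<Longrightarrow>
     dfs_step A (u # s, X, T) (v # u # s, insert v X, insert (u, v) T)"
| pop: "(\<forall>v. (u, v) \<in> A \<longrightarrow> v \<in> X) \<Longrightarrow> dfs_step A (u # s, X, T) (s, X, T)"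

definition dfs_tree :: "'a set \<Rightarrow> ('a \<times> 'a) set \<Rightarrow> 'a \<Rightarrow> ('a \<times> 'a) set \<Rightarrow> bool" where
  "dfs_tree V A r T \<longleftrightarrow> r \<in> V \<and>
     (\<exists>X. (dfs_step A)\<^sup>*\<^sup>* ([r], {r}, {}) ([], X, T))"

text \<open>Level i of T: vertices u whose tree path P_u from r has length i
  (in an out-branching, walks in T from r are exactly the paths P_u).\<close>
definition level :: "('a \<times> 'a) set \<Rightarrow> 'a \<Rightarrow> nat \<Rightarrow> 'a set" where
  "level T r i = {u. (r, u) \<in> T ^^ i}"

text \<open>Length of T: the length of a longest path in T (= the largest nonempty level).\<close>
definition tree_length :: "('a \<times> 'a) set \<Rightarrow> 'a \<Rightarrow> nat" where
  "tree_length T r = Max {i. level T r i \<noteq> {}}"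

definition backward_arc :: "('a \<times> 'a) set \<Rightarrow> ('a \<times> 'a) set \<Rightarrow> 'a \<times> 'a \<Rightarrow> bool" where
  "backward_arc A T e \<longleftrightarrow> e \<in> A \<and> (snd e, fst e) \<in> T\<^sup>*"

end

theory Submission
  imports Defs
begin

text \<open>Depths in an out-branching are unique, so a backward arc with both ends in the window
  W = V_h \<union> \<dots> \<union> V_(h+g-2) spans a tree path of length at most g - 2 and closes a cycle
  shorter than the girth. Any other arc of a DFS leads from a vertex to one that finished
  earlier; so a cycle inside W, having no backward arc, would have strictly decreasing
  finishing times all the way round, which is impossible.\<close>

definition branching :: "('a \<times> 'a) set \<Rightarrow> 'a \<Rightarrow> bool" where
  "branching T r \<longleftrightarrow> (\<forall>x x' y. (x, y) \<in> T \<longrightarrow> (x', y) \<in> T \<longrightarrow> x = x') \<and> (\<forall>x. (x, r) \<notin> T)"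

lemma branching_depth_unique:
  assumes "branching T r"
  shows "(r, u) \<in> T ^^ i \<Longrightarrow> (r, u) \<in> T ^^ j \<Longrightarrow> i = j"
proof (induction i arbitrary: u j)
  case 0
  then show ?case using assms by (cases j) (auto simp: branching_def)
next
  case (Suc i)
  then obtain p where p: "(r, p) \<in> T ^^ i" "(p, u) \<in> T" by auto
  show ?case
  proof (cases j)
    case 0
    then show ?thesis using Suc.prems p assms by (auto simp: branching_def)
  next
    case (Suc j')
    then obtain q where q: "(r, q) \<in> T ^^ j'" "(q, u) \<in> T" using Suc.prems by auto
    have "q = p" using assms p q by (auto simp: branching_def)
    then show ?thesis using Suc.IH p q Suc by auto
  qed
qed

lemma girth_le_length:
  assumes "is_cycle A c"
  shows "girth A \<le> length c"
  unfolding girth_def by (rule Least_le) (use assms in auto)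

lemma two_le_girth:
  assumes "\<exists>c. is_cycle A c"
  shows "2 \<le> girth A"
proof -
  have "\<exists>c. is_cycle A c \<and> length c = girth A"
    unfolding girth_def by (rule LeastI_ex) (use assms in auto)
  then show ?thesis by (auto simp: is_cycle_def)
qed

lemma tree_path_arc_cycle:
  assumes "T \<subseteq> A" "branching T r" "(r, v) \<in> T\<^sup>*"
    and "(v, u) \<in> T ^^ d" "(u, v) \<in> A" "u \<noteq> v"
  shows "\<exists>c. is_cycle A c \<and> length c = Suc d"
proof -
  obtain a where rv: "(r, v) \<in> T ^^ a" using assms(3) rtrancl_power by blast
  obtain f where f: "f 0 = v" "f d = u" "\<forall>i<d. (f i, f (Suc i)) \<in> T"
    using assms(4) relpow_fun_conv by metis
  have "0 < d" using f assms(6) by (cases d) auto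
  have depth_f: "(r, f i) \<in> T ^^ (a + i)" if "i \<le> d" for i
    using that by (induction i) (use f rv in auto)
  have "inj_on f {..d}"
    by (rule inj_onI) (metis atMost_iff depth_f branching_depth_unique[OF assms(2)] add_left_cancel)
  then have distinct: "distinct (map f [0..<Suc d])"
    by (simp add: distinct_map atLeast0AtMost atLeastLessThanSuc_atLeastAtMost del: upt_Suc)
  define c where "c = map f [0..<Suc d]"
  have "is_cycle A c"
    unfolding is_cycle_def
  proof (intro conjI allI impI)
    show "2 \<le> length c" "distinct c" using \<open>0 < d\<close> distinct by (simp_all add: c_def)
    fix i assume "i < length c"
    then consider "i < d" | "i = d" by (fastforce simp: c_def)
    then show "(c ! i, c ! ((i + 1) mod length c)) \<in> A"
      by cases (use f assms(1,5) in \<open>auto simp: c_def simp del: upt_Suc\<close>)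
  qed
  then show ?thesis by (auto simp: c_def)
qed

lemma backward_arc_level_gap:
  assumes "T \<subseteq> A" "branching T r" "\<forall>x. (x, x) \<notin> A"
    and "backward_arc A T (u, v)" "u \<in> level T r m" "v \<in> level T r n"
  shows "n + girth A \<le> Suc m"
proof -
  obtain d where d: "(v, u) \<in> T ^^ d"
    using assms(4) unfolding backward_arc_def rtrancl_power by auto
  have "(r, u) \<in> T ^^ (n + d)" using assms(6) d relpow_add by (fastforce simp: level_def)
  then have "m = n + d"
    using assms(5) branching_depth_unique[OF assms(2)] by (auto simp: level_def)
  have "(r, v) \<in> T\<^sup>*" using assms(6) relpow_imp_rtrancl by (auto simp: level_def)
  moreover have "u \<noteq> v" "(u, v) \<in> A" using assms(3,4) by (auto simp: backward_arc_def)
  ultimately obtain c where "is_cycle A c" "length c = Suc d"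
    using tree_path_arc_cycle[OF assms(1,2) _ d] by blast
  then show ?thesis using girth_le_length \<open>m = n + d\<close> by fastforce
qed

lemma cyclic_list_no_strict_descent:
  fixes rank :: "'a \<Rightarrow> nat"
  assumes "xs \<noteq> []"
  shows "\<exists>k < length xs. rank (xs ! k) \<le> rank (xs ! ((k + 1) mod length xs))"
proof -
  let ?R = "(\<lambda>j. rank (xs ! j)) ` {..<length xs}"
  have "Min ?R \<in> ?R" using assms by (intro Min_in) auto
  then obtain k where k: "k < length xs" "rank (xs ! k) = Min ?R" by auto
  have "(k + 1) mod length xs < length xs" using assms by simp
  then show ?thesis using k by (intro exI[of _ k]) auto
qed

fun index_of :: "'a \<Rightarrow> 'a list \<Rightarrow> nat" where
  "index_of x [] = 0"
| "index_of x (y # ys) = (if x = y then 0 else Suc (index_of x ys))"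

lemma index_of_less_length: "x \<in> set xs \<Longrightarrow> index_of x xs < length xs"
  by (induction xs) auto

lemma tree_stack_ancestor:
  assumes "successively (\<lambda>x y. (y, x) \<in> T) (u # s)" "v \<in> set s"
  shows "(v, u) \<in> T\<^sup>*"
  using assms
proof (induction s arbitrary: u)
  case (Cons y s)
  then show ?case by (cases "v = y") (auto intro: rtrancl_into_rtrancl)
qed simp

text \<open>The ghost list F holds the finished vertices, most recently finished first; the last
  conjunct is the DFS property that an arc out of a finished vertex either is backward or
  leads to a vertex finished even earlier.\<close>

definition dfs_invariant ::
  "('a \<times> 'a) set \<Rightarrow> 'a \<Rightarrow> 'a list \<Rightarrow> 'a set \<Rightarrow> ('a \<times> 'a) set \<Rightarrow> 'a list \<Rightarrow> bool" where
  "dfs_invariant A r s X T F \<longleftrightarrow>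
     X = set s \<union> set F \<and> r \<in> X \<and> T \<subseteq> A \<inter> X \<times> X \<and> branching T r \<and>
     successively (\<lambda>x y. (y, x) \<in> T) s \<and> distinct (s @ F) \<and>
     (\<forall>u v. (u, v) \<in> A \<longrightarrow> u \<in> set F \<longrightarrow>
        (v, u) \<in> T\<^sup>* \<or> (v \<in> set F \<and> index_of u F < index_of v F))"

lemma dfs_step_invariant:
  assumes "dfs_step A (s, X, T) (s', X', T')" "dfs_invariant A r s X T F"
  shows "\<exists>F'. dfs_invariant A r s' X' T' F'"
  using assms(1)
proof cases
  case (push u v s0)
  have X: "X = set (u # s0) \<union> set F" "r \<in> X" "T \<subseteq> A \<inter> X \<times> X"
    and branching: "branching T r" and stack: "successively (\<lambda>x y. (y, x) \<in> T) (u # s0)"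
    and "distinct (u # s0 @ F)"
    and order: "\<forall>x y. (x, y) \<in> A \<longrightarrow> x \<in> set F \<longrightarrow>
      (y, x) \<in> T\<^sup>* \<or> (y \<in> set F \<and> index_of x F < index_of y F)"
    using assms(2) push(1) unfolding dfs_invariant_def by auto
  have "v \<notin> X" by fact
  then have "(x, v) \<notin> T" "v \<noteq> r" for x using X by auto
  have "dfs_invariant A r s' X' T' F"
    unfolding dfs_invariant_def
  proof (intro conjI)
    show "X' = set s' \<union> set F" "r \<in> X'" "T' \<subseteq> A \<inter> X' \<times> X'" using X push by auto
    show "branching T' r"
      using branching push(4) \<open>(_, v) \<notin> T\<close> \<open>v \<noteq> r\<close> by (auto simp: branching_def)
    show "successively (\<lambda>x y. (y, x) \<in> T') s'"
      using stack push(2,4) by (auto simp: successively_Cons elim: successively_mono)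
    show "distinct (s' @ F)" using \<open>distinct (u # s0 @ F)\<close> \<open>v \<notin> X\<close> X(1) push(2) by auto
    show "\<forall>x y. (x, y) \<in> A \<longrightarrow> x \<in> set F \<longrightarrow>
        (y, x) \<in> T'\<^sup>* \<or> (y \<in> set F \<and> index_of x F < index_of y F)"
      using order rtrancl_mono[of T T'] push(4) by blast
  qed
  then show ?thesis by blast
next
  case (pop u)
  have "(w, u) \<in> T\<^sup>* \<or> (w \<in> set (u # F) \<and> index_of u (u # F) < index_of w (u # F))"
    if "(u, w) \<in> A" for w
  proof -
    have "w \<in> set (u # s') \<or> w \<in> set F" using that pop assms(2) by (auto simp: dfs_invariant_def)
    moreover have "w \<noteq> u \<Longrightarrow> w \<in> set s' \<Longrightarrow> (w, u) \<in> T\<^sup>*"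
      using tree_stack_ancestor assms(2) pop by (auto simp: dfs_invariant_def)
    ultimately show ?thesis using assms(2) pop by (auto simp: dfs_invariant_def)
  qed
  then have "dfs_invariant A r s' X' T' (u # F)"
    using assms(2) pop unfolding dfs_invariant_def by (auto simp: successively_Cons)
  then show ?thesis by blast
qed

lemma dfs_invariant_run:
  assumes "(dfs_step A)\<^sup>*\<^sup>* ([r], {r}, {}) st"
  shows "\<exists>F. case st of (s, X, T) \<Rightarrow> dfs_invariant A r s X T F"
  using assms
proof (induction rule: rtranclp_induct)
  case base
  show ?case by (rule exI[of _ "[]"]) (simp add: dfs_invariant_def branching_def)
next
  case (step st st')
  obtain s X T s' X' T' where st: "st = (s, X, T)" "st' = (s', X', T')" by (cases st, cases st')
  obtain F where "dfs_invariant A r s X T F" using step.IH st(1) by auto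
  moreover have "dfs_step A (s, X, T) (s', X', T')" using step.hyps(2) st by simp
  ultimately obtain F' where "dfs_invariant A r s' X' T' F'"
    by (blast dest: dfs_step_invariant)
  then show ?case using st(2) by auto
qed

lemma dfs_tree_finishing_order:
  assumes "dfs_tree V A r T"
  shows "T \<subseteq> A" "branching T r"
    "\<exists>finish :: 'a \<Rightarrow> nat. \<forall>u v. (r, u) \<in> T\<^sup>* \<longrightarrow> (u, v) \<in> A \<longrightarrow>
      (v, u) \<in> T\<^sup>* \<or> finish v < finish u"
proof -
  obtain X where "(dfs_step A)\<^sup>*\<^sup>* ([r], {r}, {}) ([], X, T)"
    using assms unfolding dfs_tree_def by blast
  then obtain F where inv: "dfs_invariant A r [] X T F" using dfs_invariant_run by fastforce
  have X: "X = set F" "r \<in> X" "T \<subseteq> A \<inter> X \<times> X" and "branching T r"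
    and order: "\<And>u v. (u, v) \<in> A \<Longrightarrow> u \<in> set F \<Longrightarrow>
      (v, u) \<in> T\<^sup>* \<or> (v \<in> set F \<and> index_of u F < index_of v F)"
    using inv by (auto simp: dfs_invariant_def)
  then show "T \<subseteq> A" "branching T r" by simp_all
  have finished: "u \<in> set F" if "(r, u) \<in> T\<^sup>*" for u
    using that by (induction rule: rtrancl_induct) (use X in auto)
  let ?finish = "\<lambda>x. length F - index_of x F"
  have "(v, u) \<in> T\<^sup>* \<or> ?finish v < ?finish u" if "(r, u) \<in> T\<^sup>*" "(u, v) \<in> A" for u v
  proof -
    have "(v, u) \<in> T\<^sup>* \<or> (v \<in> set F \<and> index_of u F < index_of v F)"
      using order[OF that(2) finished[OF that(1)]] .
    then show ?thesis using index_of_less_length[of v F] by linarith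
  qed
  then show "\<exists>finish :: 'a \<Rightarrow> nat. \<forall>u v. (r, u) \<in> T\<^sup>* \<longrightarrow> (u, v) \<in> A \<longrightarrow>
      (v, u) \<in> T\<^sup>* \<or> finish v < finish u"
    by (intro exI[of _ ?finish] allI impI)
qed

lemma window_no_backward_arc:
  assumes "T \<subseteq> A" "branching T r" "\<forall>x. (x, x) \<notin> A" "\<exists>c. is_cycle A c"
    and "u \<in> (\<Union>i\<in>{0..girth A - 2}. level T r (h + i))"
    and "v \<in> (\<Union>j\<in>{0..girth A - 2}. level T r (h + j))"
  shows "\<not> backward_arc A T (u, v)"
proof
  assume backward: "backward_arc A T (u, v)"
  obtain i j where "i \<le> girth A - 2" "u \<in> level T r (h + i)" "v \<in> level T r (h + j)"
    using assms(5,6) by auto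
  then have "h + j + girth A \<le> Suc (h + i)"
    using backward_arc_level_gap[OF assms(1-3) backward] by blast
  then show False using \<open>i \<le> girth A - 2\<close> two_le_girth[OF assms(4)] by linarith
qed

lemma induces_acyclic_if_no_backward_arc:
  fixes finish :: "'a \<Rightarrow> nat"
  assumes finish: "\<And>u v. (r, u) \<in> T\<^sup>* \<Longrightarrow> (u, v) \<in> A \<Longrightarrow> (v, u) \<in> T\<^sup>* \<or> finish v < finish u"
    and reachable: "\<And>u. u \<in> W \<Longrightarrow> (r, u) \<in> T\<^sup>*"
    and no_backward: "\<And>u v. u \<in> W \<Longrightarrow> v \<in> W \<Longrightarrow> \<not> backward_arc A T (u, v)"
  shows "induces_acyclic A W"
  unfolding induces_acyclic_def
proof
  assume "\<exists>c. is_cycle A c \<and> set c \<subseteq> W"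
  then obtain c where c: "is_cycle A c" "set c \<subseteq> W" by blast
  have "c \<noteq> []" using c(1) by (auto simp: is_cycle_def)
  then obtain k where k: "k < length c" "finish (c ! k) \<le> finish (c ! ((k + 1) mod length c))"
    using cyclic_list_no_strict_descent by blast
  let ?u = "c ! k" and ?v = "c ! ((k + 1) mod length c)"
  have "(k + 1) mod length c < length c" using k(1) by (metis mod_less_divisor not_less0 neq0_conv)
  then have "?u \<in> W" "?v \<in> W" using c(2) k(1) nth_mem by blast+
  moreover have arc: "(?u, ?v) \<in> A" using c(1) k(1) by (simp add: is_cycle_def)
  ultimately have "(?v, ?u) \<in> T\<^sup>* \<or> finish ?v < finish ?u" using finish reachable by blast
  then show False
    using no_backward[OF \<open>?u \<in> W\<close> \<open>?v \<in> W\<close>] arc k(2) by (auto simp: backward_arc_def)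
qed

theorem mainTheorem13:
  fixes V :: "'a set" and A :: "('a \<times> 'a) set" and r :: 'a and T :: "('a \<times> 'a) set"
  assumes "digraph V A"
    and "strongly_connected V A"
    and "\<exists>c. is_cycle A c"
    and "dfs_tree V A r T"
    and "h + girth A \<le> tree_length T r + 2"
  shows "induces_acyclic A (\<Union>i\<in>{0..girth A - 2}. level T r (h + i))
     \<and> \<not> (\<exists>u v. backward_arc A T (u, v) \<and>
            u \<in> (\<Union>i\<in>{0..girth A - 2}. level T r (h + i)) \<and>
            v \<in> (\<Union>i\<in>{0..girth A - 2}. level T r (h + i)))"
proof -
  let ?W = "\<Union>i\<in>{0..girth A - 2}. level T r (h + i)"
  have loopless: "\<forall>x. (x, x) \<notin> A" using assms(1) by (simp add: digraph_def)
  obtain finish :: "'a \<Rightarrow> nat" where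
    "\<And>u v. (r, u) \<in> T\<^sup>* \<Longrightarrow> (u, v) \<in> A \<Longrightarrow> (v, u) \<in> T\<^sup>* \<or> finish v < finish u"
    using dfs_tree_finishing_order(3)[OF assms(4)] by blast
  moreover have "(r, u) \<in> T\<^sup>*" if "u \<in> ?W" for u
    using that relpow_imp_rtrancl by (auto simp: level_def)
  moreover have no_backward: "\<not> backward_arc A T (u, v)" if "u \<in> ?W" "v \<in> ?W" for u v
    using window_no_backward_arc[OF dfs_tree_finishing_order(1,2)[OF assms(4)] loopless assms(3)] that
    by blast
  ultimately have "induces_acyclic A ?W" by (rule induces_acyclic_if_no_backward_arc)
  then show ?thesis using no_backward by blast
qed

end
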